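(* Let $M\in\mathcal H(m,n)$, $m+n=4$, $m,n\ge1$, be horizontally periodic with exactly three horizontal cylinders $C_1,C_2,C_3$ whose core curves are linearly independent in $H_1(M;\mathbb R)$. Suppose that no horizontal saddle connection lies in both the top and the bottom boundary of the same cylinder, and that none of $C_1,C_2,C_3$ is semi-simple. Then, up to relabeling, the cylinder diagram of $M$ is the following unique one: there are six horizontal saddle connections $1,\dots,6$; reading left to right, the top boundary of $C_1$ is $1,2$ and its bottom is $4,5$; the top of $C_2$ is $5,3$ and its bottom is $2,6$; the top of $C_3$ is $6,4$ and its bottom is $3,1$ (a saddle connection in the top of one cylinder is glued to the same-labelled saddle connection in the bottom of another). In particular each pair of cylinders shares exactly two saddle connections.
   Context: A cylinder is semi-simple if one of its two boundary components consists of a single horizontal saddle connection. A cylinder diagram records the horizontal cylinders together with the cyclically ordered sequences of saddle connections forming their top and bottom boundaries and their identifications, ignoring lengths. A horizontally periodic surface in a genus three stratum with two zeros has exactly six horizontal saddle connections. *)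

theory Defs
  imports Complex_Main
begin

text \<open>Horizontal saddle connections are the elements of a finite set E (type 'e).
  Cylinders are indexed by i < N.  tp i (resp. bt i) is the list of saddle
  connections on the tp (resp. bottom) boundary of cylinder i read left to
  right, taken up to cyclic rotation.  Each saddle connection lies exactly once
  on some tp and exactly once on some bottom boundary, and the copy on a tp
  boundary is glued by a translation to the copy on a bottom boundary.\<close>

definition cyl_diagram :: "nat \<Rightarrow> 'e set \<Rightarrow> (nat \<Rightarrow> 'e list) \<Rightarrow> (nat \<Rightarrow> 'e list) \<Rightarrow> bool" where
  "cyl_diagram N E tp bt \<longleftrightarrow> finite E \<and>
     (\<forall>i<N. distinct (tp i) \<and> distinct (bt i) \<and> tp i \<noteq> [] \<and> bt i \<noteq> [] \<and>
            set (tp i) \<subseteq> E \<and> set (bt i) \<subseteq> E) \<and>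
     (\<forall>e\<in>E. \<exists>!i. i < N \<and> e \<in> set (tp i)) \<and>
     (\<forall>e\<in>E. \<exists>!i. i < N \<and> e \<in> set (bt i))"

text \<open>Realizability: positive lengths of saddle connections such that the tp
  and bottom boundaries of each cylinder have the same length (heights and
  twists are unconstrained).\<close>
definition realizable :: "nat \<Rightarrow> 'e set \<Rightarrow> (nat \<Rightarrow> 'e list) \<Rightarrow> (nat \<Rightarrow> 'e list) \<Rightarrow> bool" where
  "realizable N E tp bt \<longleftrightarrow> (\<exists>w :: 'e \<Rightarrow> real. (\<forall>e\<in>E. w e > 0) \<and>
      (\<forall>i<N. sum_list (map w (tp i)) = sum_list (map w (bt i))))"

definition cyl_adj :: "(nat \<Rightarrow> 'e list) \<Rightarrow> (nat \<Rightarrow> 'e list) \<Rightarrow> nat \<Rightarrow> nat \<Rightarrow> bool" where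
  "cyl_adj tp bt i j \<longleftrightarrow> set (tp i) \<inter> set (bt j) \<noteq> {} \<or> set (bt i) \<inter> set (tp j) \<noteq> {}"

definition diagram_connected :: "nat \<Rightarrow> (nat \<Rightarrow> 'e list) \<Rightarrow> (nat \<Rightarrow> 'e list) \<Rightarrow> bool" where
  "diagram_connected N tp bt \<longleftrightarrow>
     (\<forall>i<N. \<forall>j<N. (\<lambda>a b. a < N \<and> b < N \<and> cyl_adj tp bt a b)\<^sup>*\<^sup>* i j)"

definition cyc_succ :: "'e list \<Rightarrow> 'e \<Rightarrow> 'e \<Rightarrow> bool" where
  "cyc_succ xs e e' \<longleftrightarrow> (\<exists>j<length xs. xs ! j = e \<and> xs ! ((j + 1) mod length xs) = e')"

text \<open>Endpoints of saddle connections: (e, False) is the left endpoint, (e, True)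
  the right endpoint.  At a junction of consecutive saddle connections e, e' on a
  boundary the right endpoint of e is the left endpoint of e'.\<close>
definition junction :: "nat \<Rightarrow> (nat \<Rightarrow> 'e list) \<Rightarrow> (nat \<Rightarrow> 'e list) \<Rightarrow> 'e \<times> bool \<Rightarrow> 'e \<times> bool \<Rightarrow> bool" where
  "junction N tp bt p q \<longleftrightarrow> (\<exists>i<N. \<exists>e e'. (cyc_succ (tp i) e e' \<or> cyc_succ (bt i) e e') \<and>
      p = (e, True) \<and> q = (e', False))"

definition same_point :: "nat \<Rightarrow> (nat \<Rightarrow> 'e list) \<Rightarrow> (nat \<Rightarrow> 'e list) \<Rightarrow> 'e \<times> bool \<Rightarrow> 'e \<times> bool \<Rightarrow> bool" where
  "same_point N tp bt = (symclp (junction N tp bt))\<^sup>*\<^sup>*"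

definition vertices :: "nat \<Rightarrow> 'e set \<Rightarrow> (nat \<Rightarrow> 'e list) \<Rightarrow> (nat \<Rightarrow> 'e list) \<Rightarrow> ('e \<times> bool) set set" where
  "vertices N E tp bt = {{q \<in> E \<times> UNIV. same_point N tp bt p q} | p. p \<in> E \<times> UNIV}"

text \<open>Each junction at a vertex contributes an angle pi; each right endpoint of a
  saddle connection occurs in exactly two junctions (one on a tp and one on a
  bottom boundary).  So the cone angle at v is 2 pi times the number of right
  endpoints in v, and the order of the zero is that number minus one.\<close>
definition zero_order :: "('e \<times> bool) set \<Rightarrow> nat" where
  "zero_order v = card {e. (e, True) \<in> v} - 1"

definition in_stratum2 :: "nat \<Rightarrow> nat \<Rightarrow> nat \<Rightarrow> 'e set \<Rightarrow> (nat \<Rightarrow> 'e list) \<Rightarrow> (nat \<Rightarrow> 'e list) \<Rightarrow> bool" where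
  "in_stratum2 m n N E tp bt \<longleftrightarrow> (\<exists>v1 v2. v1 \<noteq> v2 \<and> vertices N E tp bt = {v1, v2} \<and>
      zero_order v1 = m \<and> zero_order v2 = n)"

text \<open>Linear independence of the core curves in H_1(M;R), computed in the cellular
  chain complex whose 1-cells are the saddle connections (plus one vertical
  transversal per cylinder) and whose 2-cells are the cylinders cut open along
  the transversals.  The core curve of cylinder i is homologous to the cycle
  formed by its bottom saddle connections; the boundary of the 2-cell of
  cylinder i is (bottom chain) - (tp chain).\<close>
definition core_curves_indep :: "nat \<Rightarrow> 'e set \<Rightarrow> (nat \<Rightarrow> 'e list) \<Rightarrow> (nat \<Rightarrow> 'e list) \<Rightarrow> bool" where
  "core_curves_indep N E tp bt \<longleftrightarrow> (\<forall>a b :: nat \<Rightarrow> real.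
     (\<forall>e\<in>E. (\<Sum>i<N. if e \<in> set (bt i) then a i else 0) =
            (\<Sum>i<N. b i * ((if e \<in> set (bt i) then 1 else 0) - (if e \<in> set (tp i) then 1 else 0))))
     \<longrightarrow> (\<forall>i<N. a i = 0))"

definition semi_simple :: "(nat \<Rightarrow> 'e list) \<Rightarrow> (nat \<Rightarrow> 'e list) \<Rightarrow> nat \<Rightarrow> bool" where
  "semi_simple tp bt i \<longleftrightarrow> length (tp i) = 1 \<or> length (bt i) = 1"

definition cyc_eq :: "'a list \<Rightarrow> 'a list \<Rightarrow> bool" where
  "cyc_eq xs ys \<longleftrightarrow> (\<exists>k. rotate k xs = ys)"

end

theory Submission
  imports Defs
begin

text \<open>A surface in \<open>\<H>(m, n)\<close> with \<open>m + n = 4\<close> has \<open>m + n + 2 = 6\<close> horizontal saddle connections, and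
  as no cylinder is semi-simple, each of the six boundary components consists of exactly two of
  them. If the top of \<open>C\<^sub>i\<close> missed the bottom of another cylinder \<open>C\<^sub>j\<close>, it would lie in, hence
  equal, the bottom of the third cylinder, making the core curves of these two cylinders
  homologous. So the top of each cylinder meets the bottom of each other one, necessarily in a
  single saddle connection; naming the saddle connections by these pairs of cylinders yields the
  diagram.\<close>

lemma equivp_same_point: "equivp (same_point N tp bt)"
  unfolding same_point_def equivp_reflp_symp_transp by (simp add: reflp_def)

lemma same_point_refl [simp]: "same_point N tp bt p p"
  by (simp add: same_point_def)

lemma vertex_eq_class:
  assumes "v \<in> vertices N E tp bt" and "p \<in> v"
  shows "v = {q \<in> E \<times> UNIV. same_point N tp bt p q}"
proof -
  obtain p0 where v: "v = {q \<in> E \<times> UNIV. same_point N tp bt p0 q}"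
    using assms(1) unfolding vertices_def by blast
  then have "same_point N tp bt p0 = same_point N tp bt p"
    using assms(2) v equivp_same_point[unfolded equivp_def] by blast
  then show ?thesis using v by simp
qed

lemma class_mem_vertices:
  "p \<in> E \<times> UNIV \<Longrightarrow> {q \<in> E \<times> UNIV. same_point N tp bt p q} \<in> vertices N E tp bt"
  unfolding vertices_def by blast

text \<open>Every saddle connection has exactly one right endpoint, and a zero of order k is the
  right endpoint of k + 1 saddle connections.\<close>
lemma card_saddle_connections_stratum2:
  fixes E :: "'e set"
  assumes "finite E" and "in_stratum2 m n N E tp bt" and "1 \<le> m" and "1 \<le> n"
  shows "card E = m + n + 2"
proof -
  obtain v1 v2 where "v1 \<noteq> v2" and V: "vertices N E tp bt = {v1, v2}"
    and "zero_order v1 = m" and "zero_order v2 = n"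
    using assms(2) unfolding in_stratum2_def by blast
  define R :: "('e \<times> bool) set \<Rightarrow> 'e set" where "R v = {e. (e, True) \<in> v}" for v
  have "card (R v1) = m + 1" "card (R v2) = n + 1"
    using \<open>zero_order v1 = m\<close> \<open>zero_order v2 = n\<close> assms(3,4)
    unfolding zero_order_def R_def by auto
  have "R v1 \<union> R v2 = E"
  proof -
    have "e \<in> R v1 \<union> R v2" if "e \<in> E" for e
    proof -
      let ?C = "{q \<in> E \<times> UNIV. same_point N tp bt (e, True) q}"
      have "?C = v1 \<or> ?C = v2"
        using class_mem_vertices[of "(e, True)" E N tp bt] that V by simp
      moreover have "(e, True) \<in> ?C" using that by simp
      ultimately show ?thesis unfolding R_def by auto
    qed
    moreover have "R v \<subseteq> E" if "v \<in> vertices N E tp bt" for v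
      using that unfolding vertices_def R_def by blast
    ultimately show ?thesis using V by blast
  qed
  moreover have "R v1 \<inter> R v2 = {}"
  proof -
    have "v1 = v2" if "(e, True) \<in> v1" "(e, True) \<in> v2" for e
      using vertex_eq_class[of v1 N E tp bt "(e, True)"] vertex_eq_class[of v2 N E tp bt "(e, True)"] that V
      by simp
    then show ?thesis using \<open>v1 \<noteq> v2\<close> unfolding R_def by blast
  qed
  ultimately have "card E = card (R v1) + card (R v2)"
    using assms(1) by (metis card_Un_disjoint finite_Un)
  then show ?thesis using \<open>card (R v1) = m + 1\<close> \<open>card (R v2) = n + 1\<close> by simp
qed

lemma card_eq_sum_card_Int:
  fixes N :: nat
  assumes "finite A" and "\<forall>x\<in>A. \<exists>!j. j < N \<and> x \<in> P j"
  shows "card A = (\<Sum>j<N. card (A \<inter> P j))"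
proof -
  have "A = (\<Union>j<N. A \<inter> P j)" using assms(2) by blast
  also have "card \<dots> = (\<Sum>j<N. card (A \<inter> P j))"
    by (rule card_UN_disjoint) (use assms in auto)
  finally show ?thesis .
qed

lemma cyl_diagram_top_unique:
  "cyl_diagram N E tp bt \<Longrightarrow> i < N \<Longrightarrow> i' < N \<Longrightarrow> e \<in> set (tp i) \<Longrightarrow> e \<in> set (tp i') \<Longrightarrow> i = i'"
  unfolding cyl_diagram_def by blast

lemma cyl_diagram_bot_unique:
  "cyl_diagram N E tp bt \<Longrightarrow> j < N \<Longrightarrow> j' < N \<Longrightarrow> e \<in> set (bt j) \<Longrightarrow> e \<in> set (bt j') \<Longrightarrow> j = j'"
  unfolding cyl_diagram_def by blast

lemma cyl_diagram_UN_top: "cyl_diagram N E tp bt \<Longrightarrow> E = (\<Union>i<N. set (tp i))"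
  unfolding cyl_diagram_def by blast

lemma card_saddle_connections_eq_sum_length:
  assumes "cyl_diagram N E tp bt"
  shows "card E = (\<Sum>i<N. length (tp i))" and "card E = (\<Sum>i<N. length (bt i))"
proof -
  have fin: "finite E" and uT: "\<forall>e\<in>E. \<exists>!i. i < N \<and> e \<in> set (tp i)"
    and uB: "\<forall>e\<in>E. \<exists>!i. i < N \<and> e \<in> set (bt i)"
    using assms unfolding cyl_diagram_def by auto
  have "card (E \<inter> set (tp i)) = length (tp i)" "card (E \<inter> set (bt i)) = length (bt i)"
    if "i < N" for i
    using assms that unfolding cyl_diagram_def by (auto simp: distinct_card Int_absorb1)
  then show "card E = (\<Sum>i<N. length (tp i))" and "card E = (\<Sum>i<N. length (bt i))"
    using card_eq_sum_card_Int[OF fin uT] card_eq_sum_card_Int[OF fin uB] by simp_all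
qed

lemma boundary_lengths_eq_2:
  assumes diag: "cyl_diagram N E tp bt" and card: "card E = 2 * N"
    and "\<forall>i<N. \<not> semi_simple tp bt i" and "i < N"
  shows "length (tp i) = 2" and "length (bt i) = 2"
proof -
  have ge2: "2 \<le> length (tp k)" "2 \<le> length (bt k)" if "k < N" for k
  proof -
    have "0 < length (tp k)" "length (tp k) \<noteq> 1" "0 < length (bt k)" "length (bt k) \<noteq> 1"
      using assms(3) diag that unfolding semi_simple_def cyl_diagram_def by auto
    then show "2 \<le> length (tp k)" "2 \<le> length (bt k)" by linarith+
  qed
  have eq2: "f i = 2" if "\<forall>k<N. 2 \<le> f k" and "card E = (\<Sum>k<N. f k)" for f :: "nat \<Rightarrow> nat"
  proof (rule ccontr)
    assume "f i \<noteq> 2"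
    then have "(\<Sum>k<N. 2) < (\<Sum>k<N. f k)"
      using that(1) \<open>i < N\<close> \<open>f i \<noteq> 2\<close> by (intro sum_strict_mono_ex1) (auto intro!: bexI[of _ i])
    then show False using that(2) card by simp
  qed
  show "length (tp i) = 2"
    using eq2[of "\<lambda>k. length (tp k)"] ge2(1) card_saddle_connections_eq_sum_length(1)[OF diag] by blast
  show "length (bt i) = 2"
    using eq2[of "\<lambda>k. length (bt k)"] ge2(2) card_saddle_connections_eq_sum_length(2)[OF diag] by blast
qed

text \<open>Read \<open>a\<close> as coefficients of the core curves and \<open>b\<close> as a 2-chain of cylinders: the hypothesis
  says that the cycle \<open>\<Sum> a\<^sub>j \<cdot> (bottom of C\<^sub>j)\<close> is the boundary of \<open>\<Sum> b\<^sub>i \<cdot> C\<^sub>i\<close>.\<close>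
lemma core_curves_indep_potential:
  fixes a b :: "nat \<Rightarrow> real"
  assumes diag: "cyl_diagram N E tp bt" and indep: "core_curves_indep N E tp bt"
    and pot: "\<And>e i j. i < N \<Longrightarrow> j < N \<Longrightarrow> e \<in> set (tp i) \<Longrightarrow> e \<in> set (bt j) \<Longrightarrow> a j = b j - b i"
    and "l < N"
  shows "a l = 0"
proof -
  have "(\<Sum>k<N. if e \<in> set (bt k) then a k else 0) =
        (\<Sum>k<N. b k * ((if e \<in> set (bt k) then 1 else 0) - (if e \<in> set (tp k) then 1 else 0)))"
    if "e \<in> E" for e
  proof -
    obtain i j where ij: "i < N" "e \<in> set (tp i)" "j < N" "e \<in> set (bt j)"
      using diag \<open>e \<in> E\<close> unfolding cyl_diagram_def by metis
    have T: "e \<in> set (tp k) \<longleftrightarrow> k = i" and B: "e \<in> set (bt k) \<longleftrightarrow> k = j" if "k < N" for k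
      using ij that cyl_diagram_top_unique[OF diag] cyl_diagram_bot_unique[OF diag] by blast+
    have "(\<Sum>k<N. if e \<in> set (bt k) then a k else 0) = (\<Sum>k<N. if k = j then a k else 0)"
      using B by (intro sum.cong) auto
    also have "\<dots> = b j - b i" using pot ij by simp
    also have "\<dots> = (\<Sum>k<N. (if k = j then b k else 0) - (if k = i then b k else 0))"
      using ij by (simp add: sum_subtractf)
    also have "\<dots> = (\<Sum>k<N. b k * ((if e \<in> set (bt k) then 1 else 0) - (if e \<in> set (tp k) then 1 else 0)))"
      using T B by (intro sum.cong) auto
    finally show ?thesis .
  qed
  then show ?thesis using indep \<open>l < N\<close> unfolding core_curves_indep_def by blast
qed

text \<open>The core curve of \<open>C\<^sub>i\<close> is homologous to its top, which is the bottom of \<open>C\<^sub>j\<close>.\<close>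
lemma top_eq_bot_not_core_curves_indep:
  assumes diag: "cyl_diagram N E tp bt" and "i < N" "j < N" "i \<noteq> j"
    and top_bot: "set (tp i) = set (bt j)"
  shows "\<not> core_curves_indep N E tp bt"
proof
  assume indep: "core_curves_indep N E tp bt"
  define a :: "nat \<Rightarrow> real" where "a k = (if k = j then 1 else 0) - (if k = i then 1 else 0)" for k
  define b :: "nat \<Rightarrow> real" where "b k = - (if k = i then 1 else 0)" for k
  have "a l = b l - b k" if "k < N" "l < N" "e \<in> set (tp k)" "e \<in> set (bt l)" for e k l
  proof (cases "k = i")
    case True
    then have "l = j" using that top_bot cyl_diagram_bot_unique[OF diag] \<open>j < N\<close> by blast
    then show ?thesis using True \<open>i \<noteq> j\<close> by (simp add: a_def b_def)
  next
    case False
    then have "l \<noteq> j" using that top_bot cyl_diagram_top_unique[OF diag] \<open>i < N\<close> by blast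
    then show ?thesis using False by (simp add: a_def b_def)
  qed
  then have "a i = 0" using core_curves_indep_potential[OF diag indep] \<open>i < N\<close> by blast
  then show False using \<open>i \<noteq> j\<close> by (simp add: a_def)
qed

definition glued_pairwise :: "nat \<Rightarrow> (nat \<Rightarrow> 'e list) \<Rightarrow> (nat \<Rightarrow> 'e list) \<Rightarrow> bool" where
  "glued_pairwise N tp bt \<longleftrightarrow> (\<forall>i<N. \<forall>j<N. set (tp i) \<inter> set (bt j) \<noteq> {} \<longleftrightarrow> i \<noteq> j)"

lemma three_cylinders_glued_pairwise:
  assumes diag: "cyl_diagram 3 E tp bt" and indep: "core_curves_indep 3 E tp bt"
    and no_self: "\<forall>i<3. set (tp i) \<inter> set (bt i) = {}"
    and len: "\<And>i. i < 3 \<Longrightarrow> length (tp i) = 2 \<and> length (bt i) = 2"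
  shows "glued_pairwise 3 tp bt"
proof -
  have "set (tp i) \<inter> set (bt j) \<noteq> {}" if "i < 3" "j < 3" "i \<noteq> j" for i j
  proof
    assume empty: "set (tp i) \<inter> set (bt j) = {}"
    define k where "k = 3 - i - j" \<comment> \<open>the third cylinder\<close>
    have "k < 3" "k \<noteq> i" using that unfolding k_def by arith+
    have "set (tp i) \<subseteq> set (bt k)"
    proof
      fix e assume e: "e \<in> set (tp i)"
      then obtain l where l: "l < 3" "e \<in> set (bt l)"
        using diag \<open>i < 3\<close> unfolding cyl_diagram_def by blast
      have "l \<noteq> i" "l \<noteq> j" using l no_self empty \<open>i < 3\<close> e by blast+
      then have "l = k" using \<open>l < 3\<close> that unfolding k_def by linarith
      then show "e \<in> set (bt k)" using \<open>e \<in> set (bt l)\<close> by simp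
    qed
    moreover have "card (set (tp i)) = card (set (bt k))"
    proof -
      have "distinct (tp i)" "distinct (bt k)"
        using diag \<open>i < 3\<close> \<open>k < 3\<close> unfolding cyl_diagram_def by blast+
      then show ?thesis using len[OF \<open>i < 3\<close>] len[OF \<open>k < 3\<close>] by (simp add: distinct_card)
    qed
    ultimately have "set (tp i) = set (bt k)" using card_subset_eq[of "set (bt k)"] by simp
    then show False
      using top_eq_bot_not_core_curves_indep[OF diag \<open>i < 3\<close> \<open>k < 3\<close>] \<open>k \<noteq> i\<close> indep by simp
  qed
  then show ?thesis using no_self unfolding glued_pairwise_def by blast
qed

definition boundary_cyl :: "nat \<Rightarrow> (nat \<Rightarrow> 'e list) \<Rightarrow> 'e \<Rightarrow> nat" where
  "boundary_cyl N bd e = (THE i. i < N \<and> e \<in> set (bd i))"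

definition cyl_pair :: "nat \<Rightarrow> (nat \<Rightarrow> 'e list) \<Rightarrow> (nat \<Rightarrow> 'e list) \<Rightarrow> 'e \<Rightarrow> nat \<times> nat" where
  "cyl_pair N tp bt e = (boundary_cyl N tp e, boundary_cyl N bt e)"

lemma boundary_cyl_eq:
  "\<forall>e\<in>E. \<exists>!i. i < N \<and> e \<in> set (bd i) \<Longrightarrow> e \<in> E \<Longrightarrow> i < N \<Longrightarrow> e \<in> set (bd i) \<Longrightarrow>
    boundary_cyl N bd e = i"
  unfolding boundary_cyl_def by (blast intro: the_equality)

lemma cyl_pair_eq_iff:
  assumes diag: "cyl_diagram N E tp bt" and "e \<in> E" "i < N" "j < N"
  shows "cyl_pair N tp bt e = (i, j) \<longleftrightarrow> e \<in> set (tp i) \<and> e \<in> set (bt j)"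
proof -
  have uT: "\<forall>e\<in>E. \<exists>!i. i < N \<and> e \<in> set (tp i)" and uB: "\<forall>e\<in>E. \<exists>!i. i < N \<and> e \<in> set (bt i)"
    using diag unfolding cyl_diagram_def by auto
  obtain i' j' where i': "i' < N" "e \<in> set (tp i')" and j': "j' < N" "e \<in> set (bt j')"
    using uT uB \<open>e \<in> E\<close> by blast
  then have "cyl_pair N tp bt e = (i', j')"
    using boundary_cyl_eq[OF uT] boundary_cyl_eq[OF uB] \<open>e \<in> E\<close> unfolding cyl_pair_def by simp
  moreover have "e \<in> set (tp i) \<longleftrightarrow> i = i'"
    using i' cyl_diagram_top_unique[OF diag] \<open>i < N\<close> by blast
  moreover have "e \<in> set (bt j) \<longleftrightarrow> j = j'"
    using j' cyl_diagram_bot_unique[OF diag] \<open>j < N\<close> by blast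
  ultimately show ?thesis by auto
qed

lemma cyl_pair_image_top:
  assumes diag: "cyl_diagram N E tp bt" and glued: "glued_pairwise N tp bt" and "i < N"
  shows "cyl_pair N tp bt ` set (tp i) = {i} \<times> ({..<N} - {i})"
proof
  have "set (tp i) \<subseteq> E" using diag \<open>i < N\<close> unfolding cyl_diagram_def by blast
  show "cyl_pair N tp bt ` set (tp i) \<subseteq> {i} \<times> ({..<N} - {i})"
  proof
    fix p assume "p \<in> cyl_pair N tp bt ` set (tp i)"
    then obtain e where e: "e \<in> set (tp i)" "p = cyl_pair N tp bt e" by blast
    then obtain j where "j < N" "e \<in> set (bt j)"
      using diag \<open>set (tp i) \<subseteq> E\<close> unfolding cyl_diagram_def by blast
    moreover have "j \<noteq> i"
      using calculation e(1) glued \<open>i < N\<close> unfolding glued_pairwise_def by blast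
    moreover have "p = (i, j)"
      using calculation e cyl_pair_eq_iff[OF diag _ \<open>i < N\<close>] \<open>set (tp i) \<subseteq> E\<close> by blast
    ultimately show "p \<in> {i} \<times> ({..<N} - {i})" by simp
  qed
  show "{i} \<times> ({..<N} - {i}) \<subseteq> cyl_pair N tp bt ` set (tp i)"
  proof
    fix p assume "p \<in> {i} \<times> ({..<N} - {i})"
    then obtain j where "p = (i, j)" "j < N" "j \<noteq> i" by blast
    then obtain e where "e \<in> set (tp i)" "e \<in> set (bt j)"
      using glued \<open>i < N\<close> unfolding glued_pairwise_def by blast
    then have "cyl_pair N tp bt e = p"
      using cyl_pair_eq_iff[OF diag _ \<open>i < N\<close> \<open>j < N\<close>] \<open>p = (i, j)\<close> \<open>set (tp i) \<subseteq> E\<close> by blast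
    then show "p \<in> cyl_pair N tp bt ` set (tp i)" using \<open>e \<in> set (tp i)\<close> by blast
  qed
qed

lemma cyl_pair_image_bot:
  assumes diag: "cyl_diagram N E tp bt" and glued: "glued_pairwise N tp bt" and "j < N"
  shows "cyl_pair N tp bt ` set (bt j) = ({..<N} - {j}) \<times> {j}"
proof
  have "set (bt j) \<subseteq> E" using diag \<open>j < N\<close> unfolding cyl_diagram_def by blast
  show "cyl_pair N tp bt ` set (bt j) \<subseteq> ({..<N} - {j}) \<times> {j}"
  proof
    fix p assume "p \<in> cyl_pair N tp bt ` set (bt j)"
    then obtain e where e: "e \<in> set (bt j)" "p = cyl_pair N tp bt e" by blast
    then obtain i where "i < N" "e \<in> set (tp i)"
      using diag \<open>set (bt j) \<subseteq> E\<close> unfolding cyl_diagram_def by blast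
    moreover have "i \<noteq> j"
      using calculation e(1) glued \<open>j < N\<close> unfolding glued_pairwise_def by blast
    moreover have "p = (i, j)"
      using calculation e cyl_pair_eq_iff[OF diag _ _ \<open>j < N\<close>] \<open>set (bt j) \<subseteq> E\<close> by blast
    ultimately show "p \<in> ({..<N} - {j}) \<times> {j}" by simp
  qed
  show "({..<N} - {j}) \<times> {j} \<subseteq> cyl_pair N tp bt ` set (bt j)"
  proof
    fix p assume "p \<in> ({..<N} - {j}) \<times> {j}"
    then obtain i where "p = (i, j)" "i < N" "i \<noteq> j" by blast
    then obtain e where "e \<in> set (tp i)" "e \<in> set (bt j)"
      using glued \<open>j < N\<close> unfolding glued_pairwise_def by blast
    then have "cyl_pair N tp bt e = p"
      using cyl_pair_eq_iff[OF diag _ \<open>i < N\<close> \<open>j < N\<close>] \<open>p = (i, j)\<close> \<open>set (bt j) \<subseteq> E\<close> by blast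
    then show "p \<in> cyl_pair N tp bt ` set (bt j)" using \<open>e \<in> set (bt j)\<close> by blast
  qed
qed

lemma inj_on_cyl_pair:
  assumes diag: "cyl_diagram N E tp bt" and glued: "glued_pairwise N tp bt"
    and card: "card E = N * (N - 1)"
  shows "inj_on (cyl_pair N tp bt) E"
proof (rule eq_card_imp_inj_on)
  show "finite E" using diag unfolding cyl_diagram_def by blast
  have "cyl_pair N tp bt ` E = (SIGMA i:{..<N}. {..<N} - {i})"
    using cyl_pair_image_top[OF diag glued] cyl_diagram_UN_top[OF diag]
    by (simp add: image_UN Sigma_def)
  then show "card (cyl_pair N tp bt ` E) = card E"
    using card by (simp add: card_Diff_subset)
qed

lemma card_shared_boundary:
  assumes diag: "cyl_diagram N E tp bt" and glued: "glued_pairwise N tp bt"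
    and inj: "inj_on (cyl_pair N tp bt) E" and "i < N" "j < N" "i \<noteq> j"
  shows "card ((set (tp i) \<union> set (bt i)) \<inter> (set (tp j) \<union> set (bt j))) = 2"
proof -
  let ?\<kappa> = "cyl_pair N tp bt"
  define S where "S = (set (tp i) \<union> set (bt i)) \<inter> (set (tp j) \<union> set (bt j))"
  have sub: "set (tp k) \<union> set (bt k) \<subseteq> E" if "k < N" for k
    using diag that unfolding cyl_diagram_def by blast
  have "?\<kappa> ` S = (?\<kappa> ` set (tp i) \<union> ?\<kappa> ` set (bt i)) \<inter> (?\<kappa> ` set (tp j) \<union> ?\<kappa> ` set (bt j))"
    unfolding S_def using inj_on_image_Int[OF inj sub sub] assms(4,5) by (simp add: image_Un)
  also have "\<dots> = {(i, j), (j, i)}"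
    using assms(4-6) by (auto simp: cyl_pair_image_top[OF diag glued] cyl_pair_image_bot[OF diag glued])
  finally have "card (?\<kappa> ` S) = 2" using \<open>i \<noteq> j\<close> by simp
  moreover have "inj_on ?\<kappa> S" using inj_on_subset[OF inj] sub[OF assms(4)] unfolding S_def by blast
  ultimately show ?thesis unfolding S_def by (simp add: card_image)
qed

lemma cyc_eq_pair:
  assumes "distinct xs" and "set xs = {u, v}" and "u \<noteq> v"
  shows "cyc_eq xs [u, v]"
proof -
  have "length xs = 2" using assms distinct_card by fastforce
  then obtain x y where xs: "xs = [x, y]"
    by (metis One_nat_def Suc_1 length_0_conv length_Suc_conv)
  then have "xs = [u, v] \<or> xs = [v, u]" using assms by (auto simp: doubleton_eq_iff)
  then show ?thesis
    unfolding cyc_eq_def by (metis rotate0 id_apply rotate_Suc rotate1.simps(2) append_Cons append_Nil)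
qed

lemma three_cylinder_labelling:
  fixes E :: "'e set"
  assumes diag: "cyl_diagram 3 E tp bt" and glued: "glued_pairwise 3 tp bt" and card: "card E = 6"
  shows "\<exists>\<phi> :: 'e \<Rightarrow> nat. bij_betw \<phi> E {1..6} \<and>
    cyc_eq (map \<phi> (tp 0)) [1,2] \<and> cyc_eq (map \<phi> (bt 0)) [4,5] \<and>
    cyc_eq (map \<phi> (tp 1)) [5,3] \<and> cyc_eq (map \<phi> (bt 1)) [2,6] \<and>
    cyc_eq (map \<phi> (tp 2)) [6,4] \<and> cyc_eq (map \<phi> (bt 2)) [3,1]"
proof -
  \<comment> \<open>the label, in the stated diagram, of the saddle connection from \<open>C\<^sub>i\<close> up to \<open>C\<^sub>j\<close>\<close>
  define label :: "nat \<times> nat \<Rightarrow> nat" where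
    "label p = the (map_of [((0,2),1), ((0,1),2), ((1,2),3), ((2,0),4), ((1,0),5), ((2,1),6)] p)" for p
  define \<phi> where "\<phi> = label \<circ> cyl_pair 3 tp bt"
  have lt3: "{..<3::nat} = {0, 1, 2}" by auto
  have img: "\<phi> ` set (tp 0) = {1, 2}" "\<phi> ` set (bt 0) = {4, 5}"
    "\<phi> ` set (tp 1) = {5, 3}" "\<phi> ` set (bt 1) = {2, 6}"
    "\<phi> ` set (tp 2) = {6, 4}" "\<phi> ` set (bt 2) = {3, 1}"
    unfolding \<phi>_def image_comp[symmetric]
    by (auto simp: cyl_pair_image_top[OF diag glued] cyl_pair_image_bot[OF diag glued] lt3 insert_Diff_if label_def)
  have "E = set (tp 0) \<union> set (tp 1) \<union> set (tp 2)"
    using cyl_diagram_UN_top[OF diag] by (simp add: lt3 Un_ac)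
  then have "\<phi> ` E = {1, 2} \<union> {5, 3} \<union> {6, 4}" using img by (simp add: image_Un)
  also have "\<dots> = {1..6}" by auto
  finally have "\<phi> ` E = {1..6}" .
  moreover have "inj_on \<phi> E"
    using diag card \<open>\<phi> ` E = {1..6}\<close> unfolding cyl_diagram_def by (intro eq_card_imp_inj_on) auto
  ultimately have bij: "bij_betw \<phi> E {1..6}" by (simp add: bij_betw_def)
  have cyc: "cyc_eq (map \<phi> xs) [u, v]"
    if "distinct xs" "set xs \<subseteq> E" "\<phi> ` set xs = {u, v}" "u \<noteq> v" for xs u v
    using that cyc_eq_pair[of "map \<phi> xs" u v] inj_on_subset[OF \<open>inj_on \<phi> E\<close>]
    by (simp add: distinct_map)
  have "distinct (tp k) \<and> set (tp k) \<subseteq> E \<and> distinct (bt k) \<and> set (bt k) \<subseteq> E" if "k < 3" for k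
    using diag that unfolding cyl_diagram_def by blast
  then show ?thesis
    using bij cyc img by (intro exI[of _ \<phi>]) simp
qed

theorem mainTheorem20:
  fixes m n :: nat and E :: "'e set" and tp bt :: "nat \<Rightarrow> 'e list"
  assumes "m + n = 4" and "m \<ge> 1" and "n \<ge> 1"
    and "cyl_diagram 3 E tp bt"
    and "realizable 3 E tp bt"
    and "diagram_connected 3 tp bt"
    and "in_stratum2 m n 3 E tp bt"
    and "core_curves_indep 3 E tp bt"
    and "\<forall>i<3. set (tp i) \<inter> set (bt i) = {}"
    and "\<forall>i<3. \<not> semi_simple tp bt i"
  shows "(\<exists>\<sigma> \<phi>. bij_betw \<sigma> {..<(3::nat)} {..<(3::nat)} \<and> bij_betw \<phi> E {1..(6::nat)} \<and>
            cyc_eq (map \<phi> (tp (\<sigma> 0))) [1,2] \<and> cyc_eq (map \<phi> (bt (\<sigma> 0))) [4,5] \<and>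
            cyc_eq (map \<phi> (tp (\<sigma> 1))) [5,3] \<and> cyc_eq (map \<phi> (bt (\<sigma> 1))) [2,6] \<and>
            cyc_eq (map \<phi> (tp (\<sigma> 2))) [6,4] \<and> cyc_eq (map \<phi> (bt (\<sigma> 2))) [3,1])
         \<and> (\<forall>i<3. \<forall>j<3. i \<noteq> j \<longrightarrow>
              card ((set (tp i) \<union> set (bt i)) \<inter> (set (tp j) \<union> set (bt j))) = 2)"
proof -
  note diag = \<open>cyl_diagram 3 E tp bt\<close>
  have "card E = 6"
    using card_saddle_connections_stratum2[OF _ assms(7) assms(2,3)] assms(1) diag
    unfolding cyl_diagram_def by simp
  then have len: "length (tp i) = 2 \<and> length (bt i) = 2" if "i < 3" for i
    using boundary_lengths_eq_2[OF diag _ assms(10) that] by simp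
  have glued: "glued_pairwise 3 tp bt"
    using three_cylinders_glued_pairwise[OF diag assms(8,9) len] .
  have inj: "inj_on (cyl_pair 3 tp bt) E"
    using inj_on_cyl_pair[OF diag glued] \<open>card E = 6\<close> by simp
  show ?thesis
    using three_cylinder_labelling[OF diag glued \<open>card E = 6\<close>] card_shared_boundary[OF diag glued inj]
    by (intro conjI exI[of _ id]) auto
qed

end
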